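(* Let $p$ be a prime and $n\geq1$. Then $$I_{p^n}=\bigcap_{i=0}^{p^n-1}(p^n,X-i)=\bigcap_{j=0}^{p-1}\mathcal{Q}_{n,j}=\prod_{j=0}^{p-1}\mathcal{Q}_{n,j},$$ where each $\mathcal{Q}_{n,j}$ is $\mathcal{M}_j$-primary, and the middle expression is the minimal primary decomposition of $I_{p^n}$ (its associated primes being exactly the maximal ideals $\mathcal{M}_0,\dots,\mathcal{M}_{p-1}$).
   Context: For a prime $p$ and $n\geq1$, $I_{p^n}=p^n\mathrm{Int}(\mathbb{Z})\cap\mathbb{Z}[X]$, where $\mathrm{Int}(\mathbb{Z})=\{f\in\mathbb{Q}[X]: f(\mathbb{Z})\subseteq\mathbb{Z}\}$; equivalently $I_{p^n}=\{f\in\mathbb{Z}[X] : p^n\mid f(a)\text{ for all }a\in\mathbb{Z}\}$. For $j\in\{0,\dots,p-1\}$, $\mathcal{M}_j=(p,X-j)\subseteq\mathbb{Z}[X]$ and $\mathcal{Q}_{n,j}=\bigcap_{i\in\{0,\dots,p^n-1\},\ i\equiv j \ (\mathrm{mod}\ p)}(p^n,X-i)$, i.e. the set of $f\in\mathbb{Z}[X]$ with $p^n\mid f(i)$ for all integers $i\equiv j\pmod p$. *)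

theory Defs
  imports "HOL-Computational_Algebra.Computational_Algebra"
begin

definition is_ideal :: "'a::comm_ring_1 set \<Rightarrow> bool" where
  "is_ideal I \<longleftrightarrow> 0 \<in> I \<and> (\<forall>a\<in>I. \<forall>b\<in>I. a + b \<in> I) \<and> (\<forall>r. \<forall>a\<in>I. r * a \<in> I)"

definition gen_ideal :: "'a::comm_ring_1 set \<Rightarrow> 'a set" where
  "gen_ideal S = {x. \<exists>F c. finite F \<and> F \<subseteq> S \<and> x = (\<Sum>s\<in>F. c s * s)}"

definition ideal_prod :: "'a::comm_ring_1 set \<Rightarrow> 'a set \<Rightarrow> 'a set" where
  "ideal_prod I J = gen_ideal {a * b | a b. a \<in> I \<and> b \<in> J}"

fun ideal_prod_upto :: "(nat \<Rightarrow> 'a::comm_ring_1 set) \<Rightarrow> nat \<Rightarrow> 'a set" where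
  "ideal_prod_upto Q 0 = UNIV"
| "ideal_prod_upto Q (Suc k) = ideal_prod (ideal_prod_upto Q k) (Q k)"

definition radical :: "'a::comm_ring_1 set \<Rightarrow> 'a set" where
  "radical I = {x. \<exists>k. x ^ k \<in> I}"

definition prime_ideal :: "'a::comm_ring_1 set \<Rightarrow> bool" where
  "prime_ideal P \<longleftrightarrow> is_ideal P \<and> P \<noteq> UNIV \<and> (\<forall>a b. a * b \<in> P \<longrightarrow> a \<in> P \<or> b \<in> P)"

definition maximal_ideal :: "'a::comm_ring_1 set \<Rightarrow> bool" where
  "maximal_ideal M \<longleftrightarrow> is_ideal M \<and> M \<noteq> UNIV \<and>
     (\<forall>J. is_ideal J \<and> M \<subseteq> J \<longrightarrow> J = M \<or> J = UNIV)"

definition primary_ideal :: "'a::comm_ring_1 set \<Rightarrow> bool" where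
  "primary_ideal Q \<longleftrightarrow> is_ideal Q \<and> Q \<noteq> UNIV \<and>
     (\<forall>a b. a * b \<in> Q \<longrightarrow> a \<in> Q \<or> (\<exists>k. b ^ k \<in> Q))"

definition primary_for :: "'a::comm_ring_1 set \<Rightarrow> 'a set \<Rightarrow> bool" where
  "primary_for Q P \<longleftrightarrow> primary_ideal Q \<and> radical Q = P"

definition minimal_primary_decomposition :: "'a::comm_ring_1 set \<Rightarrow> ('b \<Rightarrow> 'a set) \<Rightarrow> 'b set \<Rightarrow> bool" where
  "minimal_primary_decomposition I Q A \<longleftrightarrow>
     finite A \<and> I = (\<Inter>j\<in>A. Q j) \<and> (\<forall>j\<in>A. primary_ideal (Q j)) \<and>
     (\<forall>j\<in>A. \<forall>k\<in>A. j \<noteq> k \<longrightarrow> radical (Q j) \<noteq> radical (Q k)) \<and>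
     (\<forall>j\<in>A. \<not> (\<Inter>k\<in>A - {j}. Q k) \<subseteq> Q j)"

definition IntZ :: "rat poly set" where
  "IntZ = {f. \<forall>a::int. poly f (of_int a) \<in> \<int>}"

text \<open>\<open>I_{p^n} = p^n Int(Z) \<inter> Z[X]\<close>, with \<open>Z[X]\<close> embedded in \<open>Q[X]\<close>.\<close>
definition I_pn :: "nat \<Rightarrow> nat \<Rightarrow> int poly set" where
  "I_pn p n = {f. map_poly of_int f \<in> (\<lambda>g. smult (of_nat (p ^ n)) g) ` IntZ}"

definition ideal2 :: "int \<Rightarrow> int \<Rightarrow> int poly set" where
  "ideal2 m i = gen_ideal {[:m:], [:-i, 1:]}"

definition M_id :: "nat \<Rightarrow> nat \<Rightarrow> int poly set" where
  "M_id p j = ideal2 (int p) (int j)"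

definition Q_id :: "nat \<Rightarrow> nat \<Rightarrow> nat \<Rightarrow> int poly set" where
  "Q_id p n j = (\<Inter>i\<in>{i. i < p ^ n \<and> i mod p = j mod p}. ideal2 (int (p ^ n)) (int i))"

end

theory Submission
  imports Defs "HOL-Number_Theory.Cong"
begin

text \<open>A polynomial lies in \<open>I_{p^n}\<close> iff all its integer values are divisible by \<open>p^n\<close>;
  as \<open>f(a) mod p^n\<close> only depends on \<open>a mod p^n\<close>, it suffices to test \<open>a = 0, \<dots>, p^n - 1\<close>,
  and grouping these points by their residue \<open>j\<close> mod \<open>p\<close> gives the ideals \<open>Q_{n,j}\<close>.
  Each \<open>Q_{n,j}\<close> lies between \<open>M_j^n\<close> and \<open>M_j\<close>; it is primary because a polynomial
  outside \<open>M_j\<close> takes values prime to \<open>p\<close> at all points \<open>i \<equiv> j\<close>.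
  The polynomial \<open>h_k\<close>, the product of \<open>X - t\<close> over \<open>t < p\<close>, \<open>t \<noteq> k\<close>, lies in every \<open>M_j\<close>
  with \<open>j \<noteq> k\<close> but not in \<open>M_k\<close>, so \<open>h_k^n\<close> shows that no component is redundant.
  Writing \<open>1 = u h_k^n + m\<close> with \<open>m \<in> M_k\<close>, the decomposition \<open>1 = (1 - m^n) + m^n\<close>, where
  \<open>h_k^n\<close> divides \<open>1 - m^n\<close>, shows that \<open>Q_{n,k}\<close> is comaximal with the other components,
  so their intersection is their product.\<close>

lemma is_ideal_add: "is_ideal I \<Longrightarrow> a \<in> I \<Longrightarrow> b \<in> I \<Longrightarrow> a + b \<in> I"
  unfolding is_ideal_def by simp

lemma is_ideal_mult: "is_ideal I \<Longrightarrow> a \<in> I \<Longrightarrow> r * a \<in> I"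
  unfolding is_ideal_def by simp

lemma is_ideal_eq_UNIV: "is_ideal I \<Longrightarrow> 1 \<in> I \<Longrightarrow> I = UNIV"
  using is_ideal_mult[of I 1] by auto

lemma is_ideal_sum:
  assumes "is_ideal I" "finite F" "F \<subseteq> I"
  shows "(\<Sum>s\<in>F. c s * s) \<in> I"
  using assms(2,3) by (induction F rule: finite_induct) (use assms(1) in \<open>auto simp: is_ideal_def\<close>)

lemma is_ideal_INT: "(\<And>x. x \<in> A \<Longrightarrow> is_ideal (Q x)) \<Longrightarrow> is_ideal (\<Inter>x\<in>A. Q x)"
  unfolding is_ideal_def by simp

lemma is_ideal_Int: "is_ideal I \<Longrightarrow> is_ideal J \<Longrightarrow> is_ideal (I \<inter> J)"
  unfolding is_ideal_def by simp

lemma subset_gen_ideal: "S \<subseteq> gen_ideal S"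
proof
  fix x assume "x \<in> S"
  then show "x \<in> gen_ideal S"
    unfolding gen_ideal_def by (intro CollectI exI[of _ "{x}"] exI[of _ "\<lambda>_. 1"]) auto
qed

lemma gen_ideal_least:
  assumes "is_ideal I" "S \<subseteq> I"
  shows "gen_ideal S \<subseteq> I"
proof
  fix x assume "x \<in> gen_ideal S"
  then obtain F c where "finite F" "F \<subseteq> S" "x = (\<Sum>s\<in>F. c s * s)"
    unfolding gen_ideal_def by blast
  then show "x \<in> I"
    using is_ideal_sum[OF assms(1)] assms(2) by blast
qed

lemma is_ideal_gen_ideal: "is_ideal (gen_ideal S)"
  unfolding is_ideal_def
proof (intro conjI ballI allI)
  show "0 \<in> gen_ideal S"
    unfolding gen_ideal_def by (intro CollectI exI[of _ "{}"]) simp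
next
  fix x y assume "x \<in> gen_ideal S" "y \<in> gen_ideal S"
  then obtain F c G d where F: "finite F" "F \<subseteq> S" "x = (\<Sum>s\<in>F. c s * s)"
    and G: "finite G" "G \<subseteq> S" "y = (\<Sum>s\<in>G. d s * s)"
    unfolding gen_ideal_def by blast
  define e where "e s = (if s \<in> F then c s else 0) + (if s \<in> G then d s else 0)" for s
  have "x = (\<Sum>s\<in>F \<union> G. (if s \<in> F then c s else 0) * s)"
    unfolding F(3) by (rule sum.mono_neutral_cong_left) (use F G in auto)
  moreover have "y = (\<Sum>s\<in>F \<union> G. (if s \<in> G then d s else 0) * s)"
    unfolding G(3) by (rule sum.mono_neutral_cong_left) (use F G in auto)
  ultimately have "x + y = (\<Sum>s\<in>F \<union> G. e s * s)"
    by (simp only: e_def distrib_right sum.distrib)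
  then show "x + y \<in> gen_ideal S"
    unfolding gen_ideal_def using F G by (intro CollectI exI[of _ "F \<union> G"] exI[of _ e]) simp
next
  fix r x assume "x \<in> gen_ideal S"
  then obtain F c where F: "finite F" "F \<subseteq> S" "x = (\<Sum>s\<in>F. c s * s)"
    unfolding gen_ideal_def by blast
  then have "r * x = (\<Sum>s\<in>F. (r * c s) * s)"
    by (simp add: sum_distrib_left mult.assoc)
  then show "r * x \<in> gen_ideal S"
    unfolding gen_ideal_def using F by (intro CollectI exI[of _ F] exI[of _ "\<lambda>s. r * c s"]) simp
qed

lemma ideal_prod_eq_Int_if_comaximal:
  assumes I: "is_ideal I" and J: "is_ideal J"
    and a: "a \<in> I" and b: "b \<in> J" and ab: "a + b = 1"
  shows "ideal_prod I J = I \<inter> J"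
proof
  have "u * v \<in> I \<inter> J" if "u \<in> I" "v \<in> J" for u v
    using is_ideal_mult[OF I \<open>u \<in> I\<close>, of v] is_ideal_mult[OF J \<open>v \<in> J\<close>, of u]
    by (simp add: mult.commute)
  then show "ideal_prod I J \<subseteq> I \<inter> J"
    unfolding ideal_prod_def by (intro gen_ideal_least is_ideal_Int I J) blast
next
  show "I \<inter> J \<subseteq> ideal_prod I J"
  proof
    fix x assume x: "x \<in> I \<inter> J"
    have "a * x \<in> ideal_prod I J" "x * b \<in> ideal_prod I J"
      unfolding ideal_prod_def using x a b by (auto intro!: subsetD[OF subset_gen_ideal])
    then have "a * x + x * b \<in> ideal_prod I J"
      unfolding ideal_prod_def by (rule is_ideal_add[OF is_ideal_gen_ideal])
    moreover have "a * x + x * b = x * (a + b)"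
      by (simp add: algebra_simps)
    ultimately show "x \<in> ideal_prod I J" using ab by simp
  qed
qed

lemma ideal_prod_upto_eq_INT:
  assumes ideal: "\<And>j. j < k \<Longrightarrow> is_ideal (Q j)"
    and comaximal: "\<And>l. l < k \<Longrightarrow> \<exists>a\<in>(\<Inter>j\<in>{..<k} - {l}. Q j). \<exists>b\<in>Q l. a + b = 1"
  shows "m \<le> k \<Longrightarrow> ideal_prod_upto Q m = (\<Inter>j<m. Q j)"
proof (induction m)
  case 0
  then show ?case by simp
next
  case (Suc m)
  then have "m < k" by simp
  then obtain a b where "a \<in> (\<Inter>j\<in>{..<k} - {m}. Q j)" and ab: "b \<in> Q m" "a + b = 1"
    using comaximal by blast
  with \<open>m < k\<close> have a: "a \<in> (\<Inter>j<m. Q j)" by auto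
  have "ideal_prod_upto Q (Suc m) = ideal_prod (\<Inter>j<m. Q j) (Q m)"
    using Suc by simp
  also have "\<dots> = (\<Inter>j<m. Q j) \<inter> Q m"
    using \<open>m < k\<close>
    by (intro ideal_prod_eq_Int_if_comaximal[OF _ _ a ab] is_ideal_INT ideal) auto
  also have "\<dots> = (\<Inter>j<Suc m. Q j)"
    by (auto simp: lessThan_Suc)
  finally show ?case .
qed

lemma poly_cong:
  fixes x y :: "'a::unique_euclidean_ring"
  shows "[x = y] (mod m) \<Longrightarrow> [poly f x = poly f y] (mod m)"
  by (induction f) (auto intro: cong_add cong_mult)

lemma dvd_poly_cong_iff:
  fixes x y :: "'a::unique_euclidean_ring"
  shows "[x = y] (mod m) \<Longrightarrow> m dvd poly f x \<longleftrightarrow> m dvd poly f y"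
  by (simp add: cong_dvd_iff poly_cong)

lemma dvd_poly_mod_eq_iff:
  assumes "(i::nat) mod m = j mod m"
  shows "int m dvd poly f (int i) \<longleftrightarrow> int m dvd poly f (int j)"
  using assms unfolding cong_def[symmetric] cong_int_iff[symmetric] by (rule dvd_poly_cong_iff)

lemma dvd_poly_all_iff_residues:
  assumes "m > 0"
  shows "(\<forall>a. int m dvd poly f a) \<longleftrightarrow> (\<forall>i<m. int m dvd poly f (int i))"
proof (intro iffI allI)
  fix a assume H: "\<forall>i<m. int m dvd poly f (int i)"
  have "nat (a mod int m) < m" "[a = int (nat (a mod int m))] (mod int m)"
    using assms by (simp_all add: nat_less_iff cong_def)
  with H show "int m dvd poly f a"
    using dvd_poly_cong_iff by blast
qed simp

lemma poly_map_poly_of_int: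
  "poly (map_poly (of_int :: int \<Rightarrow> 'a::comm_ring_1) f) (of_int a) = of_int (poly f a)"
  by (induction f) (auto simp: map_poly_pCons)

lemma mem_ideal2_iff: "f \<in> ideal2 m i \<longleftrightarrow> m dvd poly f i"
proof
  assume "f \<in> ideal2 m i"
  then obtain F c where F: "F \<subseteq> {[:m:], [:-i, 1:]}" "f = (\<Sum>s\<in>F. c s * s)"
    unfolding ideal2_def gen_ideal_def by blast
  have "poly f i = (\<Sum>s\<in>F. poly (c s) i * poly s i)"
    using F(2) by (simp add: poly_sum)
  also have "m dvd \<dots>"
    using F(1) by (intro dvd_sum) auto
  finally show "m dvd poly f i" .
next
  assume "m dvd poly f i"
  then obtain k where k: "poly f i = m * k" by blast
  have "f = synthetic_div f i * [:-i, 1:] + [:k:] * [:m:]"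
    using synthetic_div_correct'[of i f] by (simp add: k mult.commute)
  also have "\<dots> \<in> ideal2 m i"
    unfolding ideal2_def
    by (intro is_ideal_add is_ideal_mult is_ideal_gen_ideal subsetD[OF subset_gen_ideal]) auto
  finally show "f \<in> ideal2 m i" .
qed

lemma mem_M_id_iff: "f \<in> M_id p j \<longleftrightarrow> int p dvd poly f (int j)"
  by (simp add: M_id_def mem_ideal2_iff)

lemma mem_Q_id_iff:
  "f \<in> Q_id p n j \<longleftrightarrow> (\<forall>i<p ^ n. i mod p = j mod p \<longrightarrow> int (p ^ n) dvd poly f (int i))"
  by (auto simp: Q_id_def mem_ideal2_iff)

lemma is_ideal_ideal2: "is_ideal (ideal2 m i)"
  unfolding ideal2_def by (rule is_ideal_gen_ideal)

lemma is_ideal_M_id: "is_ideal (M_id p j)"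
  unfolding M_id_def by (rule is_ideal_ideal2)

lemma is_ideal_Q_id: "is_ideal (Q_id p n j)"
  unfolding Q_id_def by (intro is_ideal_INT is_ideal_ideal2)

lemma mem_I_pn_iff:
  assumes "p > 0"
  shows "f \<in> I_pn p n \<longleftrightarrow> (\<forall>i<p ^ n. int (p ^ n) dvd poly f (int i))"
proof -
  define c :: rat where "c = of_nat (p ^ n)"
  have "c \<noteq> 0" using assms by (simp add: c_def)
  have "f \<in> I_pn p n \<longleftrightarrow> smult (1 / c) (map_poly of_int f) \<in> IntZ"
    unfolding I_pn_def c_def[symmetric] using \<open>c \<noteq> 0\<close> by force
  also have "\<dots> \<longleftrightarrow> (\<forall>a. of_int (poly f a) / c \<in> \<int>)"
    by (simp add: IntZ_def poly_map_poly_of_int)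
  also have "\<dots> \<longleftrightarrow> (\<forall>a. int (p ^ n) dvd poly f a)"
    using of_int_div_of_int_in_Ints_iff[where 'a=rat, of _ "int (p ^ n)"] assms
    by (simp add: c_def)
  finally show ?thesis
    using dvd_poly_all_iff_residues[of "p ^ n" f] assms by simp
qed

lemma I_pn_eq_INT_ideal2:
  "p > 0 \<Longrightarrow> I_pn p n = (\<Inter>i\<in>{0..<p ^ n}. ideal2 (int (p ^ n)) (int i))"
  by (auto simp: mem_I_pn_iff mem_ideal2_iff)

lemma I_pn_eq_INT_Q_id:
  assumes "p > 0"
  shows "I_pn p n = (\<Inter>j\<in>{0..<p}. Q_id p n j)"
proof (intro set_eqI iffI)
  fix f assume "f \<in> (\<Inter>j\<in>{0..<p}. Q_id p n j)"
  then have "f \<in> Q_id p n (i mod p)" for i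
    using assms by simp
  then show "f \<in> I_pn p n"
    using assms by (simp add: mem_Q_id_iff mem_I_pn_iff)
qed (use assms in \<open>simp add: mem_Q_id_iff mem_I_pn_iff\<close>)

lemma int_dvd_diff_iff_mod_eq: "int p dvd int k - int j \<longleftrightarrow> k mod p = j mod p"
proof -
  have "int p dvd int k - int j \<longleftrightarrow> [int k = int j] (mod int p)"
    by (simp add: cong_iff_dvd_diff)
  also have "\<dots> \<longleftrightarrow> [k = j] (mod p)"
    by (rule cong_int_iff)
  also have "\<dots> \<longleftrightarrow> k mod p = j mod p"
    by (rule cong_def)
  finally show ?thesis .
qed

lemma power_mem_Q_id:
  assumes "x \<in> M_id p j"
  shows "x ^ n \<in> Q_id p n j"
  unfolding mem_Q_id_iff
proof (intro allI impI)
  fix i assume "i mod p = j mod p"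
  then have "int p dvd poly x (int i)"
    using assms dvd_poly_mod_eq_iff[of i p j] by (simp add: mem_M_id_iff)
  then show "int (p ^ n) dvd poly (x ^ n) (int i)"
    by (simp add: poly_power dvd_power_same)
qed

lemma Q_id_subset_M_id:
  assumes "p > 0" "n \<ge> 1" "j < p"
  shows "Q_id p n j \<subseteq> M_id p j"
proof
  fix f assume "f \<in> Q_id p n j"
  moreover have "j < p ^ n"
    using assms self_le_power[of p n] by simp
  ultimately have "int (p ^ n) dvd poly f (int j)"
    by (simp add: mem_Q_id_iff)
  moreover have "int p dvd int (p ^ n)"
    using assms(2) by simp
  ultimately show "f \<in> M_id p j"
    unfolding mem_M_id_iff by (rule dvd_trans[rotated])
qed

lemma mem_M_id_power_iff: "prime p \<Longrightarrow> k > 0 \<Longrightarrow> x ^ k \<in> M_id p j \<longleftrightarrow> x \<in> M_id p j"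
  by (simp add: mem_M_id_iff poly_power prime_dvd_power_iff)

lemma one_notin_M_id: "prime p \<Longrightarrow> 1 \<notin> M_id p j"
  by (auto simp: mem_M_id_iff dest: prime_gt_1_nat)

lemma radical_Q_id:
  assumes "prime p" "n \<ge> 1" "j < p"
  shows "radical (Q_id p n j) = M_id p j"
proof
  show "M_id p j \<subseteq> radical (Q_id p n j)"
    unfolding radical_def using power_mem_Q_id by blast
  show "radical (Q_id p n j) \<subseteq> M_id p j"
  proof
    fix x assume "x \<in> radical (Q_id p n j)"
    then obtain k where "x ^ k \<in> Q_id p n j"
      unfolding radical_def by blast
    then have "x ^ k \<in> M_id p j"
      using Q_id_subset_M_id assms prime_gt_0_nat by blast
    moreover have "k > 0"
      using calculation one_notin_M_id[OF assms(1)] by (cases k) auto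
    ultimately show "x \<in> M_id p j"
      using mem_M_id_power_iff assms(1) by blast
  qed
qed

text \<open>\<open>M_j\<close> is the kernel of \<open>f \<mapsto> f(j) mod p\<close> onto the field \<open>\<int>/p\<close>, so any \<open>f \<notin> M_j\<close>
  becomes a unit modulo \<open>M_j\<close>.\<close>

lemma M_id_comaximal:
  assumes "prime p" "f \<notin> M_id p j"
  obtains u m where "m \<in> M_id p j" "u * f + m = 1"
proof -
  define c where "c = poly f (int j)"
  have "coprime c (int p)"
    using assms by (simp add: c_def mem_M_id_iff prime_imp_coprime coprime_commute)
  then obtain a b where ab: "a * c + b * int p = 1"
    using bezout_int[of c "int p"] by auto
  have "poly (1 - [:a:] * f) (int j) = b * int p"
    using ab by (simp add: c_def eq_diff_eq)
  then have "1 - [:a:] * f \<in> M_id p j"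
    by (simp add: mem_M_id_iff)
  then show thesis
    by (rule that[of _ "[:a:]"]) simp
qed

lemma maximal_ideal_M_id:
  assumes "prime p"
  shows "maximal_ideal (M_id p j)"
  unfolding maximal_ideal_def
proof (intro conjI allI impI is_ideal_M_id)
  show "M_id p j \<noteq> UNIV"
    using one_notin_M_id[OF assms] by blast
next
  fix J assume J: "is_ideal J \<and> M_id p j \<subseteq> J"
  show "J = M_id p j \<or> J = UNIV"
  proof (cases "J \<subseteq> M_id p j")
    case False
    then obtain f where f: "f \<in> J" "f \<notin> M_id p j" by blast
    then obtain u m where "m \<in> M_id p j" "u * f + m = 1"
      using M_id_comaximal assms by blast
    moreover have "u * f + m \<in> J" if "m \<in> M_id p j"
      using J f(1) that by (intro is_ideal_add is_ideal_mult) auto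
    ultimately show ?thesis
      using J is_ideal_eq_UNIV by metis
  qed (use J in blast)
qed

lemma primary_for_Q_id:
  assumes "prime p" "n \<ge> 1" "j < p"
  shows "primary_for (Q_id p n j) (M_id p j)"
  unfolding primary_for_def primary_ideal_def
proof (intro conjI allI impI is_ideal_Q_id radical_Q_id assms)
  show "Q_id p n j \<noteq> UNIV"
    using Q_id_subset_M_id[OF prime_gt_0_nat[OF assms(1)] assms(2,3)] one_notin_M_id[OF assms(1)]
    by blast
next
  fix a b assume ab: "a * b \<in> Q_id p n j"
  show "a \<in> Q_id p n j \<or> (\<exists>k. b ^ k \<in> Q_id p n j)"
  proof (cases "b \<in> M_id p j")
    case False
    have "a \<in> Q_id p n j"
      unfolding mem_Q_id_iff
    proof (intro allI impI)
      fix i assume i: "i < p ^ n" "i mod p = j mod p"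
      have "\<not> int p dvd poly b (int i)"
        using False dvd_poly_mod_eq_iff[OF i(2)] by (simp add: mem_M_id_iff)
      then have "coprime (int (p ^ n)) (poly b (int i))"
        using assms(1) by (simp add: prime_imp_coprime)
      moreover have "int (p ^ n) dvd poly a (int i) * poly b (int i)"
        using ab i by (simp add: mem_Q_id_iff)
      ultimately show "int (p ^ n) dvd poly a (int i)"
        using coprime_dvd_mult_left_iff by blast
    qed
    then show ?thesis ..
  qed (use power_mem_Q_id in blast)
qed

lemma M_id_inj:
  assumes "j < p" "k < p" "M_id p j = M_id p k"
  shows "j = k"
proof -
  have "[:- int j, 1:] \<in> M_id p j"
    by (simp add: mem_M_id_iff)
  then have "[:- int j, 1:] \<in> M_id p k"
    by (simp only: assms(3))
  then have "k mod p = j mod p"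
    by (simp add: mem_M_id_iff int_dvd_diff_iff_mod_eq)
  then show ?thesis
    using assms by simp
qed

definition sep_poly :: "nat \<Rightarrow> nat \<Rightarrow> int poly" where
  "sep_poly p k = (\<Prod>t\<in>{0..<p} - {k}. [:- int t, 1:])"

lemma poly_sep_poly: "poly (sep_poly p k) x = (\<Prod>t\<in>{0..<p} - {k}. x - int t)"
  by (simp add: sep_poly_def poly_prod)

lemma sep_poly_mem_M_id:
  assumes "j < p" "j \<noteq> k"
  shows "sep_poly p k \<in> M_id p j"
proof -
  have "(\<Prod>t\<in>{0..<p} - {k}. int j - int t) = 0"
    using assms by (auto simp: prod_zero_iff)
  then show ?thesis
    by (simp only: mem_M_id_iff poly_sep_poly dvd_0_right)
qed

lemma sep_poly_notin_M_id:
  assumes "prime p" "k < p"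
  shows "sep_poly p k \<notin> M_id p k"
proof
  assume "sep_poly p k \<in> M_id p k"
  then have "int p dvd (\<Prod>t\<in>{0..<p} - {k}. int k - int t)"
    by (simp add: mem_M_id_iff poly_sep_poly)
  moreover have "prime (int p)"
    using assms(1) by simp
  ultimately obtain t where "t \<in> {0..<p} - {k}" "int p dvd int k - int t"
    by (meson finite_atLeastLessThan finite_Diff prime_dvd_prod_iff)
  then show False
    using assms(2) by (simp add: int_dvd_diff_iff_mod_eq)
qed

lemma sep_poly_power_mem_Q_id: "j < p \<Longrightarrow> j \<noteq> k \<Longrightarrow> sep_poly p k ^ n \<in> Q_id p n j"
  by (intro power_mem_Q_id sep_poly_mem_M_id)

lemma sep_poly_power_notin_Q_id:
  assumes "prime p" "n \<ge> 1" "k < p"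
  shows "sep_poly p k ^ n \<notin> Q_id p n k"
proof
  assume "sep_poly p k ^ n \<in> Q_id p n k"
  then have "sep_poly p k ^ n \<in> M_id p k"
    using Q_id_subset_M_id[OF prime_gt_0_nat[OF assms(1)] assms(2,3)] by blast
  then show False
    using sep_poly_notin_M_id[OF assms(1,3)] mem_M_id_power_iff[OF assms(1)] assms(2) by simp
qed

lemma Q_id_comaximal:
  assumes "prime p" "n \<ge> 1" "k < p"
  shows "\<exists>a\<in>(\<Inter>j\<in>{..<p} - {k}. Q_id p n j). \<exists>b\<in>Q_id p n k. a + b = 1"
proof -
  define h where "h = sep_poly p k ^ n"
  have "h \<notin> M_id p k"
    using sep_poly_notin_M_id mem_M_id_power_iff assms by (simp add: h_def)
  then obtain u m where m: "m \<in> M_id p k" and um: "u * h + m = 1"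
    using M_id_comaximal assms(1) by blast
  define S where "S = (\<Sum>i<n. m ^ i)"
  have "1 - m = u * h"
    using um by (simp add: algebra_simps)
  then have "1 - m ^ n = (S * u) * h"
    by (simp add: one_diff_power_eq S_def ac_simps)
  then have "(S * u) * h + m ^ n = 1"
    by (simp add: algebra_simps)
  moreover have "(S * u) * h \<in> (\<Inter>j\<in>{..<p} - {k}. Q_id p n j)"
    unfolding h_def using sep_poly_power_mem_Q_id is_ideal_mult[OF is_ideal_Q_id] by simp
  ultimately show ?thesis
    using power_mem_Q_id[OF m] by blast
qed

lemma minimal_primary_decomposition_I_pn:
  assumes "prime p" "n \<ge> 1"
  shows "minimal_primary_decomposition (I_pn p n) (Q_id p n) {0..<p}"
  unfolding minimal_primary_decomposition_def
proof (intro conjI ballI impI)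
  show "finite {0..<p}" by simp
  show "I_pn p n = (\<Inter>j\<in>{0..<p}. Q_id p n j)"
    using I_pn_eq_INT_Q_id prime_gt_0_nat[OF assms(1)] by simp
next
  fix j assume "j \<in> {0..<p}"
  then show "primary_ideal (Q_id p n j)"
    using primary_for_Q_id[OF assms] unfolding primary_for_def by simp
next
  fix j k assume "j \<in> {0..<p}" "k \<in> {0..<p}" "j \<noteq> k"
  then show "radical (Q_id p n j) \<noteq> radical (Q_id p n k)"
    using radical_Q_id[OF assms] M_id_inj by auto
next
  fix k assume "k \<in> {0..<p}"
  then have "sep_poly p k ^ n \<in> (\<Inter>j\<in>{0..<p} - {k}. Q_id p n j)"
    "sep_poly p k ^ n \<notin> Q_id p n k"
    using sep_poly_power_mem_Q_id sep_poly_power_notin_Q_id[OF assms] by auto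
  then show "\<not> (\<Inter>j\<in>{0..<p} - {k}. Q_id p n j) \<subseteq> Q_id p n k"
    by blast
qed

theorem mainTheorem8:
  fixes p n :: nat
  assumes "prime p" and "n \<ge> 1"
  shows "I_pn p n = (\<Inter>i\<in>{0..<p ^ n}. ideal2 (int (p ^ n)) (int i))
       \<and> I_pn p n = (\<Inter>j\<in>{0..<p}. Q_id p n j)
       \<and> I_pn p n = ideal_prod_upto (Q_id p n) p
       \<and> (\<forall>j<p. primary_for (Q_id p n j) (M_id p j))
       \<and> minimal_primary_decomposition (I_pn p n) (Q_id p n) {0..<p}
       \<and> (\<forall>j<p. maximal_ideal (M_id p j))
       \<and> radical ` Q_id p n ` {0..<p} = M_id p ` {0..<p}"
proof -
  have "p > 0"
    using assms(1) prime_gt_0_nat by blast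
  have "ideal_prod_upto (Q_id p n) p = (\<Inter>j<p. Q_id p n j)"
    by (rule ideal_prod_upto_eq_INT[OF is_ideal_Q_id Q_id_comaximal[OF assms]]) simp_all
  moreover have "radical ` Q_id p n ` {0..<p} = M_id p ` {0..<p}"
    unfolding image_image using radical_Q_id[OF assms] by simp
  ultimately show ?thesis
    using I_pn_eq_INT_ideal2[OF \<open>p > 0\<close>] I_pn_eq_INT_Q_id[OF \<open>p > 0\<close>]
      primary_for_Q_id[OF assms] maximal_ideal_M_id[OF assms(1)]
      minimal_primary_decomposition_I_pn[OF assms]
    by (simp add: atLeast0LessThan)
qed

end
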